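(* Let $(\mathcal X,\mathcal A,P)$ be a probability space and $f\colon\mathcal X\to\mathbb R$ measurable with $m:=\mathbb E_P[f]$ and $\sigma^2:=\mathrm{Var}_P(f)\in[0,\infty)$, such that $M(\lambda):=\mathbb E_P[e^{\lambda(f-m)}]$ is finite for all $\lambda$ in a neighborhood of $0$. For $C>0$ let $\mathcal U_C(P):=\{Q:Q\ll P,\ \mathrm{KL}(Q\Vert P)\le C\}$ and $S_f(C):=\sup_{Q\in\mathcal U_C(P)}\int f\,\mathrm dQ$, where $\mathrm{KL}(Q\Vert P)=\int\log(\mathrm dQ/\mathrm dP)\,\mathrm dQ$. Then as $C\downarrow0$, \[S_f(C)=m+\sqrt{2\mathrm{Var}_P(f)}\sqrt C+o(\sqrt C).\] Moreover, if $\mathrm{Var}_P(f)>0$, then $\lim_{C\downarrow0}\frac{S_f(C)-m}{\sqrt{2\mathrm{Var}_P(f)}\sqrt C}=1$; in particular for any $k<\sqrt{2\mathrm{Var}_P(f)}$ there is a sequence $C_j\downarrow0$ with $S_f(C_j)>m+k\sqrt{C_j}$ for all large $j$. *)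

theory Defs
  imports "HOL-Probability.Probability" "HOL-Library.Landau_Symbols"
begin

text \<open>Finite KL requires integrability of log(dQ/dP) w.r.t. Q;
  otherwise KL(Q||P) = +infinity and Q is excluded.\<close>

definition KL_ball :: "'a measure \<Rightarrow> real \<Rightarrow> 'a measure set" where
  "KL_ball P C = {Q. sets Q = sets P \<and> prob_space Q \<and> absolutely_continuous P Q \<and>
      integrable Q (entropy_density (exp 1) P Q) \<and> KL_divergence (exp 1) P Q \<le> C}"

definition S_sup :: "'a measure \<Rightarrow> ('a \<Rightarrow> real) \<Rightarrow> real \<Rightarrow> real" where
  "S_sup P f C = (SUP Q\<in>KL_ball P C. integral\<^sup>L Q f)"

end

theory Submission
  imports Defs
begin

text \<open>
  Upper bound: if Q has density D with respect to P, Young's inequality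
  a D \<le> D ln D - D + exp a at a = l (f - m) gives
  l (E_Q f - m) \<le> KL(Q||P) + E_P exp (l (f - m)) - 1 \<le> C + l^2 \<sigma>^2/2 + O(l^3),
  and l = r sqrt C with r close to the minimiser of 1/r + r \<sigma>^2/2 gives
  S_f(C) \<le> m + (sqrt (2 \<sigma>^2) + \<epsilon>) sqrt C.

  Lower bound: for a bounded centred h, the density 1 + t h has
  KL divergence t^2 E[h^2]/2 + O(t^3) and raises the mean of f by t E[h f].
  Taking for h a recentred truncation of f - m, for which
  E[h^2] \<le> E[h f] is close to \<sigma>^2, and t of order sqrt C gives
  S_f(C) \<ge> m + (sqrt (2 \<sigma>^2) - \<epsilon>) sqrt C.
\<close>

lemma mult_le_xlnx_minus_plus_exp:
  fixes p a :: real
  assumes "0 \<le> p"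
  shows "a * p \<le> p * ln p - p + exp a"
proof (cases "p = 0")
  case False
  then have p: "0 < p" using assms by simp
  have "1 + (a - ln p) \<le> exp (a - ln p)" by (rule exp_ge_add_one_self)
  also have "\<dots> = exp a / p" using p by (simp add: exp_diff)
  finally have "p * (1 + (a - ln p)) \<le> p * (exp a / p)" using p by (intro mult_left_mono) auto
  then show ?thesis using p by (simp add: algebra_simps)
qed simp

lemma exp_le_taylor2_remainder:
  fixes x :: real
  shows "exp x \<le> 1 + x + x\<^sup>2 / 2 + \<bar>x\<bar> ^ 3 * exp \<bar>x\<bar> / 6"
proof -
  obtain t where t: "\<bar>t\<bar> \<le> \<bar>x\<bar>" "exp x = (\<Sum>m<3. x ^ m / fact m) + exp t / fact 3 * x ^ 3"
    using Maclaurin_exp_le[of x 3] by blast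
  have "(\<Sum>m<3. x ^ m / fact m) = 1 + x + x\<^sup>2 / 2"
    by (simp add: eval_nat_numeral fact_numeral power2_eq_square)
  moreover have "exp t * x ^ 3 \<le> exp \<bar>x\<bar> * \<bar>x\<bar> ^ 3"
  proof -
    have "exp t * x ^ 3 \<le> exp t * \<bar>x\<bar> ^ 3"
      by (intro mult_left_mono) (auto simp: power_abs[symmetric])
    also have "\<dots> \<le> exp \<bar>x\<bar> * \<bar>x\<bar> ^ 3"
      using t(1) by (intro mult_right_mono) auto
    finally show ?thesis .
  qed
  ultimately show ?thesis using t(2) by (simp add: fact_numeral mult.commute)
qed

lemma cube_le_6_exp:
  fixes y :: real
  assumes "0 \<le> y"
  shows "y ^ 3 \<le> 6 * exp y"
proof -
  obtain t where t: "exp y = (\<Sum>m<4. y ^ m / fact m) + exp t / fact 4 * y ^ 4"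
    using Maclaurin_exp_le[of y 4] by blast
  have "(\<Sum>m<4. y ^ m / fact m) = 1 + y + y\<^sup>2 / 2 + y ^ 3 / 6"
    by (simp add: eval_nat_numeral fact_numeral)
  moreover have "0 \<le> exp t / fact 4 * y ^ 4" using assms by simp
  ultimately show ?thesis using t assms by simp
qed

lemma cube_mult_exp_le:
  fixes c y :: real
  assumes "0 < c"
  shows "\<bar>y\<bar> ^ 3 * exp (c * \<bar>y\<bar>) \<le> 6 / c ^ 3 * (exp (2 * c * y) + exp (- (2 * c * y)))"
proof -
  have "(c * \<bar>y\<bar>) ^ 3 \<le> 6 * exp (c * \<bar>y\<bar>)" using cube_le_6_exp[of "c * \<bar>y\<bar>"] assms by simp
  then have "\<bar>y\<bar> ^ 3 \<le> 6 / c ^ 3 * exp (c * \<bar>y\<bar>)"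
    using assms by (simp add: power_mult_distrib field_simps)
  then have "\<bar>y\<bar> ^ 3 * exp (c * \<bar>y\<bar>) \<le> 6 / c ^ 3 * exp (c * \<bar>y\<bar>) * exp (c * \<bar>y\<bar>)"
    by (intro mult_right_mono) auto
  also have "\<dots> = 6 / c ^ 3 * exp (2 * c * \<bar>y\<bar>)"
    by (simp add: mult.assoc flip: exp_add)
  also have "\<dots> \<le> 6 / c ^ 3 * (exp (2 * c * y) + exp (- (2 * c * y)))"
  proof -
    have "exp (2 * c * \<bar>y\<bar>) \<le> exp (2 * c * y) + exp (- (2 * c * y))"
      by (cases "0 \<le> y") (auto simp: add_pos_nonneg add_nonneg_pos)
    then show ?thesis using assms by (intro mult_left_mono) auto
  qed
  finally show ?thesis .
qed

lemma ln_one_plus_le_cubic: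
  fixes x :: real
  assumes "-1 < x"
  shows "ln (1 + x) \<le> x - x\<^sup>2 / 2 + x ^ 3 / 3"
proof -
  define \<phi> where "\<phi> = (\<lambda>y::real. y - y\<^sup>2 / 2 + y ^ 3 / 3 - ln (1 + y))"
  have \<phi>': "DERIV \<phi> y :> y ^ 3 / (1 + y)" if "-1 < y" for y
  proof -
    have "DERIV \<phi> y :> 1 - y + y\<^sup>2 - 1 / (1 + y)"
      unfolding \<phi>_def using that
      by (auto intro!: derivative_eq_intros simp: power2_eq_square field_simps)
    moreover have "1 - y + y\<^sup>2 - 1 / (1 + y) = y ^ 3 / (1 + y)"
      using that by (simp add: field_simps power2_eq_square power3_eq_cube)
    ultimately show ?thesis by simp
  qed
  have "\<phi> 0 \<le> \<phi> x"
  proof (cases "0 \<le> x")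
    case True
    show ?thesis
    proof (rule DERIV_nonneg_imp_nondecreasing[OF True])
      fix y assume "0 \<le> y" "y \<le> x"
      then show "\<exists>z. DERIV \<phi> y :> z \<and> 0 \<le> z" using \<phi>'[of y] by auto
    qed
  next
    case False
    show ?thesis
    proof (rule deriv_nonpos_imp_antimono[of x 0 \<phi> "\<lambda>y. y ^ 3 / (1 + y)"])
      fix y assume "y \<in> {x..0}"
      then have y: "-1 < y" "y \<le> 0" using assms by auto
      then show "DERIV \<phi> y :> y ^ 3 / (1 + y)" using \<phi>' by blast
      have "y ^ 3 \<le> 0" using y by (simp add: power_le_zero_eq)
      then show "y ^ 3 / (1 + y) \<le> 0" using y by (auto simp: divide_nonpos_pos)
    qed (use False in simp)
  qed
  then show ?thesis unfolding \<phi>_def by simp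
qed

lemma xlnx_one_plus_le_cubic:
  fixes x :: real
  assumes "\<bar>x\<bar> \<le> 1/2"
  shows "(1 + x) * ln (1 + x) \<le> x + x\<^sup>2 / 2 + \<bar>x\<bar> ^ 3"
proof -
  have "(1 + x) * ln (1 + x) \<le> (1 + x) * (x - x\<^sup>2 / 2 + x ^ 3 / 3)"
    using assms ln_one_plus_le_cubic[of x] by (intro mult_left_mono) auto
  also have "\<dots> = x + x\<^sup>2 / 2 - x ^ 3 / 6 + x ^ 4 / 3"
    by (simp add: power2_eq_square power3_eq_cube eval_nat_numeral) (simp add: field_simps)
  also have "\<dots> \<le> x + x\<^sup>2 / 2 + \<bar>x\<bar> ^ 3"
  proof -
    have "- (x ^ 3) / 6 \<le> \<bar>x\<bar> ^ 3 / 6"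
      using abs_ge_minus_self[of "x ^ 3"] by (simp add: power_abs)
    moreover have "x ^ 4 = \<bar>x\<bar> ^ 3 * \<bar>x\<bar>" by (simp add: power_even_abs_numeral eval_nat_numeral)
    moreover have "\<bar>x\<bar> ^ 3 * \<bar>x\<bar> \<le> \<bar>x\<bar> ^ 3 * (1/2)" using assms by (intro mult_left_mono) auto
    moreover have "0 \<le> \<bar>x\<bar> ^ 3" by simp
    ultimately show ?thesis by linarith
  qed
  finally show ?thesis .
qed

lemma KL_ball_mono: "C \<le> C' \<Longrightarrow> KL_ball P C \<subseteq> KL_ball P C'"
  unfolding KL_ball_def by auto

lemma prob_space_density_iff_integral_eq_1:
  fixes D :: "'a \<Rightarrow> real"
  assumes D: "D \<in> borel_measurable P" "\<And>x. 0 \<le> D x"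
  shows "prob_space (density P D) \<longleftrightarrow> integrable P D \<and> integral\<^sup>L P D = 1"
proof -
  have space: "emeasure (density P D) (space (density P D)) = (\<integral>\<^sup>+x. D x \<partial>P)"
    using emeasure_density[of D P "space P"] D(1) by (simp add: nn_integral_set_ennreal[symmetric])
  show ?thesis
  proof
    assume "prob_space (density P D)"
    then have nn_int: "(\<integral>\<^sup>+x. D x \<partial>P) = 1" using space prob_space.emeasure_space_1 by metis
    have int_D: "integrable P D"
      by (rule integrableI_nn_integral_finite[where x=1, OF D(1)]) (use nn_int D(2) in auto)
    moreover have "integral\<^sup>L P D = 1"
      using nn_integral_eq_integral[OF int_D] nn_int D(2) by (simp add: ennreal_eq_1)
    ultimately show "integrable P D \<and> integral\<^sup>L P D = 1" ..
  next
    assume "integrable P D \<and> integral\<^sup>L P D = 1"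
    then have "(\<integral>\<^sup>+x. D x \<partial>P) = 1" using nn_integral_eq_integral[of P D] D(2) by simp
    then show "prob_space (density P D)" using space by (intro prob_spaceI) simp
  qed
qed

lemma KL_ball_density:
  assumes P: "prob_space P" and Q: "Q \<in> KL_ball P C"
  obtains D where "D \<in> borel_measurable P" "\<And>x. 0 \<le> D x" "Q = density P D"
    "integrable P D" "integral\<^sup>L P D = 1"
    "integrable P (\<lambda>x. D x * ln (D x))" "(\<integral>x. D x * ln (D x) \<partial>P) \<le> C"
proof -
  interpret prob_space P by fact
  have sQ: "sets Q = sets P" and ac: "absolutely_continuous P Q"
    and int: "integrable Q (entropy_density (exp 1) P Q)"
    and kl: "KL_divergence (exp 1) P Q \<le> C"
    using Q unfolding KL_ball_def by auto
  interpret Q: prob_space Q using Q unfolding KL_ball_def by auto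
  have "finite_measure Q" by unfold_locales
  from real_RN_deriv[OF this ac sQ] obtain D
    where D: "D \<in> borel_measurable P" "AE x in P. RN_deriv P Q x = ennreal (D x)" "\<And>x. 0 \<le> D x"
    by metis
  have "Q = density P (RN_deriv P Q)"
    using ac sQ by (rule density_RN_deriv[symmetric])
  also have "\<dots> = density P D"
    using D by (auto intro!: density_cong)
  finally have Q_eq: "Q = density P D" .
  have "AE x in Q. RN_deriv P Q x = ennreal (D x)"
    using absolutely_continuous_AE[OF sQ ac D(2)] .
  then have ent: "AE x in Q. entropy_density (exp 1) P Q x = ln (D x)"
    by eventually_elim (auto simp: entropy_density_def log_def D(3))
  have ent_meas: "entropy_density (exp 1) P Q \<in> borel_measurable Q"
    by (subst measurable_cong_sets[OF sQ refl]) (rule measurable_entropy_density)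
  have ln_meas: "(\<lambda>x. ln (D x)) \<in> borel_measurable Q"
    by (subst measurable_cong_sets[OF sQ refl]) (use D(1) in measurable)
  have "integrable Q (\<lambda>x. ln (D x))"
    using integrable_cong_AE[OF ent_meas ln_meas ent] int by simp
  then have int_DlnD: "integrable P (\<lambda>x. D x * ln (D x))"
    using integrable_real_density[of D P "\<lambda>x. ln (D x)"] D(1,3) Q_eq by simp
  have "KL_divergence (exp 1) P Q = integral\<^sup>L Q (\<lambda>x. ln (D x))"
    unfolding KL_divergence_def by (rule integral_cong_AE[OF ent_meas ln_meas ent])
  also have "\<dots> = (\<integral>x. D x * ln (D x) \<partial>P)"
    using D by (subst Q_eq, subst integral_real_density) auto
  finally have KL_eq: "KL_divergence (exp 1) P Q = (\<integral>x. D x * ln (D x) \<partial>P)" .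
  have "integrable P D \<and> integral\<^sup>L P D = 1"
    using prob_space_density_iff_integral_eq_1[OF D(1,3)] Q.prob_space_axioms Q_eq by simp
  then show ?thesis using that D(1,3) Q_eq int_DlnD KL_eq kl by auto
qed

lemma density_in_KL_ball:
  assumes P: "prob_space P"
    and D: "D \<in> borel_measurable P" "\<And>x. 0 \<le> D x" "integrable P D" "integral\<^sup>L P D = 1"
      "integrable P (\<lambda>x. D x * ln (D x))" "(\<integral>x. D x * ln (D x) \<partial>P) \<le> C"
  shows "density P D \<in> KL_ball P C"
proof -
  interpret prob_space P by fact
  have D_ae: "AE x in P. 0 \<le> D x" using D(2) by simp
  have "prob_space (density P D)"
    using prob_space_density_iff_integral_eq_1[OF D(1,2)] D(3,4) by simp
  moreover have "absolutely_continuous P (density P D)"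
    by (intro absolutely_continuousI_density) (use D(1) in measurable)
  moreover have "KL_divergence (exp 1) P (density P D) = (\<integral>x. D x * ln (D x) \<partial>P)"
    using KL_density[of "exp 1" D] D(1) D_ae by (simp add: log_def)
  moreover have "integrable (density P D) (entropy_density (exp 1) P (density P D))"
  proof -
    have "density P (RN_deriv P (density P D)) = density P D"
      by (intro density_RN_deriv_density) (use D(1) in measurable)
    then have "AE x in P. RN_deriv P (density P D) x = D x"
      using D(1) D_ae by (intro density_unique) auto
    then have "AE x in P. D x * entropy_density (exp 1) P (density P D) x = D x * ln (D x)"
      using D_ae by eventually_elim (auto simp: entropy_density_def log_def)
    then have "integrable P (\<lambda>x. D x * entropy_density (exp 1) P (density P D) x)"
      using D(1,5) by (subst integrable_cong_AE) auto
    then show ?thesis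
      using D(1) D_ae by (subst integrable_real_density) auto
  qed
  ultimately show ?thesis using D(6) unfolding KL_ball_def by auto
qed

lemma self_in_KL_ball:
  assumes "prob_space P" "0 \<le> C"
  shows "P \<in> KL_ball P C"
proof -
  interpret prob_space P by fact
  show ?thesis
    using density_in_KL_ball[OF assms(1), of "\<lambda>_. 1" C] assms(2) by (simp add: density_1 prob_space)
qed

section \<open>Upper bound via Young's inequality\<close>

lemma integral_density_le_entropy_plus_mgf:
  fixes D g :: "'a \<Rightarrow> real" and l :: real
  assumes P: "prob_space P"
    and D: "D \<in> borel_measurable P" "\<And>x. 0 \<le> D x" "integrable P D" "integral\<^sup>L P D = 1"
      "integrable P (\<lambda>x. D x * ln (D x))"
    and g: "g \<in> borel_measurable P" "integrable P (\<lambda>x. exp (l * g x))"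
      "integrable P (\<lambda>x. exp (- (l * g x)))"
    and l: "0 < l"
  shows "integrable P (\<lambda>x. D x * g x)"
    and "l * (\<integral>x. D x * g x \<partial>P) \<le> (\<integral>x. D x * ln (D x) \<partial>P) + (\<integral>x. exp (l * g x) \<partial>P) - 1"
proof -
  have young: "a * D x \<le> D x * ln (D x) - D x + exp a" for a x
    using mult_le_xlnx_minus_plus_exp[OF D(2)] .
  define F where "F x = D x * ln (D x) - D x + exp (l * g x) + exp (- (l * g x))" for x
  have int_F: "integrable P F" unfolding F_def using D g by auto
  have F_bound: "norm (l * g x * D x) \<le> norm (F x)" for x
  proof -
    have "\<bar>l * g x * D x\<bar> \<le> F x"
      using young[of "l * g x" x] young[of "- (l * g x)" x]
        exp_gt_zero[of "l * g x"] exp_gt_zero[of "- (l * g x)"]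
      unfolding F_def abs_le_iff mult_minus_left by (intro conjI) linarith+
    then show ?thesis by simp
  qed
  have int_lgD: "integrable P (\<lambda>x. l * g x * D x)"
    by (rule Bochner_Integration.integrable_bound[OF int_F]) (use D g F_bound in auto)
  then have "integrable P (\<lambda>x. (1 / l) * (l * g x * D x))" by (rule integrable_mult_right)
  moreover have "(\<lambda>x. (1 / l) * (l * g x * D x)) = (\<lambda>x. D x * g x)" using l by auto
  ultimately show "integrable P (\<lambda>x. D x * g x)" by simp
  have "l * (\<integral>x. D x * g x \<partial>P) = (\<integral>x. l * g x * D x \<partial>P)"
    by (simp add: mult.commute mult.left_commute)
  also have "\<dots> \<le> (\<integral>x. D x * ln (D x) - D x + exp (l * g x) \<partial>P)"
    by (rule integral_mono[OF int_lgD]) (use D g young in auto)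
  also have "\<dots> = (\<integral>x. D x * ln (D x) \<partial>P) + (\<integral>x. exp (l * g x) \<partial>P) - 1"
    using D g by simp
  finally show "l * (\<integral>x. D x * g x \<partial>P) \<le> (\<integral>x. D x * ln (D x) \<partial>P) + (\<integral>x. exp (l * g x) \<partial>P) - 1" .
qed

lemma KL_ball_integral_le_mgf:
  assumes P: "prob_space P" and Q: "Q \<in> KL_ball P C"
    and g: "g \<in> borel_measurable P" "integrable P (\<lambda>x. exp (l * g x))"
      "integrable P (\<lambda>x. exp (- (l * g x)))"
    and l: "0 < l"
  shows "integrable Q g" and "l * integral\<^sup>L Q g \<le> C + (\<integral>x. exp (l * g x) \<partial>P) - 1"
proof -
  obtain D where D: "D \<in> borel_measurable P" "\<And>x. 0 \<le> D x" "Q = density P D"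
    "integrable P D" "integral\<^sup>L P D = 1"
    "integrable P (\<lambda>x. D x * ln (D x))" "(\<integral>x. D x * ln (D x) \<partial>P) \<le> C"
    using KL_ball_density[OF P Q] by blast
  note bound = integral_density_le_entropy_plus_mgf[OF P D(1,2,4,5,6) g l]
  show "integrable Q g" using bound(1) D(1,2,3) g(1) by (simp add: integrable_real_density)
  have "integral\<^sup>L Q g = (\<integral>x. D x * g x \<partial>P)" using D(1,2,3) g(1) by (simp add: integral_real_density)
  then show "l * integral\<^sup>L Q g \<le> C + (\<integral>x. exp (l * g x) \<partial>P) - 1" using bound(2) D(7) by simp
qed

lemma mgf_le_quadratic_plus_cubic:
  fixes g :: "'a \<Rightarrow> real"
  assumes P: "prob_space P"
    and g: "g \<in> borel_measurable P" "integrable P g" "integral\<^sup>L P g = 0" "integrable P (\<lambda>x. (g x)\<^sup>2)"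
    and mgf: "0 < \<delta>" "\<And>l. \<bar>l\<bar> < \<delta> \<Longrightarrow> integrable P (\<lambda>x. exp (l * g x))"
  obtains l1 K where "0 < l1"
    "\<And>l. 0 < l \<Longrightarrow> l \<le> l1 \<Longrightarrow>
       (\<integral>x. exp (l * g x) \<partial>P) - 1 \<le> l\<^sup>2 / 2 * (\<integral>x. (g x)\<^sup>2 \<partial>P) + l ^ 3 * K"
proof -
  interpret prob_space P by fact
  define l1 where "l1 = \<delta> / 3"
  have l1: "0 < l1" "2 * l1 < \<delta>" unfolding l1_def using mgf by auto
  define H where "H x = \<bar>g x\<bar> ^ 3 * exp (l1 * \<bar>g x\<bar>)" for x
  have H_meas: "H \<in> borel_measurable P" unfolding H_def using g(1) by measurable
  define G where "G x = 6 / l1 ^ 3 * (exp (2 * l1 * g x) + exp (- (2 * l1 * g x)))" for x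
  have int_G: "integrable P G"
    using mgf(2)[of "2 * l1"] mgf(2)[of "- (2 * l1)"] l1 unfolding G_def by auto
  have H_le_G: "norm (H x) \<le> norm (G x)" for x
    using cube_mult_exp_le[OF l1(1), of "g x"] l1(1) unfolding H_def G_def by simp
  have int_H: "integrable P H"
    by (rule Bochner_Integration.integrable_bound[OF int_G]) (use H_meas H_le_G in auto)
  define K where "K = integral\<^sup>L P H / 6"
  have "(\<integral>x. exp (l * g x) \<partial>P) - 1 \<le> l\<^sup>2 / 2 * (\<integral>x. (g x)\<^sup>2 \<partial>P) + l ^ 3 * K"
    if l: "0 < l" "l \<le> l1" for l
  proof -
    have taylor: "exp (l * g x) \<le> 1 + l * g x + l\<^sup>2 / 2 * (g x)\<^sup>2 + l ^ 3 / 6 * H x" for x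
    proof -
      have "\<bar>l * g x\<bar> ^ 3 * exp \<bar>l * g x\<bar> = l ^ 3 * (\<bar>g x\<bar> ^ 3 * exp (l * \<bar>g x\<bar>))"
        using l by (simp add: abs_mult power_mult_distrib)
      also have "\<dots> \<le> l ^ 3 * H x"
        unfolding H_def using l by (intro mult_left_mono) (auto intro!: mult_right_mono)
      finally show ?thesis
        using exp_le_taylor2_remainder[of "l * g x"] by (simp add: power_mult_distrib)
    qed
    have "(\<integral>x. exp (l * g x) \<partial>P) \<le> (\<integral>x. 1 + l * g x + l\<^sup>2 / 2 * (g x)\<^sup>2 + l ^ 3 / 6 * H x \<partial>P)"
      using mgf(2)[of l] l l1 g int_H taylor by (intro integral_mono) auto
    also have "\<dots> = 1 + l\<^sup>2 / 2 * (\<integral>x. (g x)\<^sup>2 \<partial>P) + l ^ 3 * K"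
      using g int_H unfolding K_def by (simp add: prob_space)
    finally show ?thesis by simp
  qed
  then show ?thesis using that l1(1) by blast
qed

lemma KL_ball_integral_upper:
  fixes P :: "'a measure" and f :: "'a \<Rightarrow> real"
  assumes P: "prob_space P"
    and f: "f \<in> borel_measurable P" "integrable P f" "integrable P (\<lambda>x. (f x)\<^sup>2)"
    and mgf: "\<exists>\<delta>>0. \<forall>l. \<bar>l\<bar> < \<delta> \<longrightarrow> integrable P (\<lambda>x. exp (l * (f x - integral\<^sup>L P f)))"
  defines "m \<equiv> integral\<^sup>L P f"
    and "v \<equiv> integral\<^sup>L P (\<lambda>x. (f x - integral\<^sup>L P f)\<^sup>2)"
  obtains l1 K where "0 < l1"
    "\<And>l C Q. 0 < l \<Longrightarrow> l \<le> l1 \<Longrightarrow> Q \<in> KL_ball P C \<Longrightarrow>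
       integral\<^sup>L Q f \<le> m + C / l + l / 2 * v + l\<^sup>2 * K"
proof -
  interpret prob_space P by fact
  define g where "g x = f x - m" for x
  have g_meas: "g \<in> borel_measurable P" unfolding g_def using f(1) by measurable
  have int_g: "integrable P g" unfolding g_def using f(2) by simp
  have "integral\<^sup>L P g = 0" unfolding g_def m_def using f(2) by (simp add: prob_space)
  moreover have "integrable P (\<lambda>x. (g x)\<^sup>2)"
    using f(2,3) unfolding g_def power2_diff by simp
  moreover obtain \<delta> where \<delta>: "0 < \<delta>" "\<And>l. \<bar>l\<bar> < \<delta> \<Longrightarrow> integrable P (\<lambda>x. exp (l * g x))"
    using mgf unfolding g_def m_def by blast
  ultimately obtain l0 K where l0: "0 < l0" and mgf_bound: "\<And>l. 0 < l \<Longrightarrow> l \<le> l0 \<Longrightarrow>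
      (\<integral>x. exp (l * g x) \<partial>P) - 1 \<le> l\<^sup>2 / 2 * v + l ^ 3 * K"
    using mgf_le_quadratic_plus_cubic[OF P g_meas int_g _ _ \<delta>] unfolding v_def g_def m_def by blast
  define l1 where "l1 = min l0 (\<delta> / 2)"
  have "integral\<^sup>L Q f \<le> m + C / l + l / 2 * v + l\<^sup>2 * K"
    if l: "0 < l" "l \<le> l1" and Q: "Q \<in> KL_ball P C" for l C Q
  proof -
    interpret Q: prob_space Q using Q unfolding KL_ball_def by auto
    have exps: "integrable P (\<lambda>x. exp (l * g x))" "integrable P (\<lambda>x. exp (- (l * g x)))"
      using \<delta>(2)[of l] \<delta>(2)[of "- l"] l unfolding l1_def by auto
    note KL_bound = KL_ball_integral_le_mgf[OF P Q g_meas exps l(1)]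
    have "integrable Q (\<lambda>x. g x + m)" using KL_bound(1) by simp
    then have "integral\<^sup>L Q f = integral\<^sup>L Q g + m"
      unfolding g_def by (simp add: Q.prob_space)
    moreover have "l * integral\<^sup>L Q g \<le> C + l\<^sup>2 / 2 * v + l ^ 3 * K"
      using KL_bound(2) mgf_bound[of l] l unfolding l1_def by auto
    then have "integral\<^sup>L Q g \<le> C / l + l / 2 * v + l\<^sup>2 * K"
      using l by (simp add: field_simps power2_eq_square power3_eq_cube)
    ultimately show ?thesis by simp
  qed
  moreover have "0 < l1" unfolding l1_def using l0 \<delta> by simp
  ultimately show ?thesis using that by blast
qed

section \<open>Lower bound via tilted densities\<close>

lemma xlnx_one_plus_mult_le:
  fixes t y B :: real
  assumes t: "0 \<le> t" "t * B \<le> 1/2" and y: "\<bar>y\<bar> \<le> B"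
  shows "(1 + t * y) * ln (1 + t * y) \<le> t * y + t\<^sup>2 / 2 * (1 + 2 * t * B) * y\<^sup>2"
proof -
  have "\<bar>t * y\<bar> ^ 3 = t ^ 3 * \<bar>y\<bar> * y\<^sup>2"
    using t(1) by (simp add: abs_mult power_mult_distrib eval_nat_numeral)
  also have "\<dots> \<le> t ^ 3 * B * y\<^sup>2"
    using t(1) y by (intro mult_right_mono mult_left_mono) auto
  finally have cube: "\<bar>t * y\<bar> ^ 3 \<le> t ^ 3 * B * y\<^sup>2" .
  have "\<bar>t * y\<bar> \<le> 1/2"
    using mult_left_mono[OF y t(1)] t by (simp add: abs_mult)
  then have "(1 + t * y) * ln (1 + t * y) \<le> t * y + (t * y)\<^sup>2 / 2 + \<bar>t * y\<bar> ^ 3"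
    by (rule xlnx_one_plus_le_cubic)
  moreover have "t * y + (t * y)\<^sup>2 / 2 + t ^ 3 * B * y\<^sup>2 = t * y + t\<^sup>2 / 2 * (1 + 2 * t * B) * y\<^sup>2"
    by (simp add: algebra_simps power2_eq_square power3_eq_cube)
  ultimately show ?thesis using cube by linarith
qed

lemma integral_density_one_plus:
  fixes h f :: "'a \<Rightarrow> real"
  assumes h: "h \<in> borel_measurable M" "\<And>x. \<bar>h x\<bar> \<le> B"
    and t: "0 \<le> t" "t * B \<le> 1" and f: "integrable M f"
  shows "integral\<^sup>L (density M (\<lambda>x. 1 + t * h x)) f = integral\<^sup>L M f + t * (\<integral>x. h x * f x \<partial>M)"
proof -
  have "integrable M (\<lambda>x. h x * f x)"
  proof (rule Bochner_Integration.integrable_bound[of M "\<lambda>x. B * f x"])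
    show "AE x in M. norm (h x * f x) \<le> norm (B * f x)"
      using order.trans[OF h(2) abs_ge_self] by (auto simp: abs_mult intro!: mult_right_mono)
  qed (use f h(1) in auto)
  moreover have "0 \<le> 1 + t * h x" for x
  proof -
    have "\<bar>t * h x\<bar> \<le> 1" using mult_left_mono[OF h(2)[of x] t(1)] t by (simp add: abs_mult)
    then show ?thesis by (simp add: abs_le_iff)
  qed
  then have "integral\<^sup>L (density M (\<lambda>x. 1 + t * h x)) f = (\<integral>x. f x + t * (h x * f x) \<partial>M)"
    using h(1) f by (subst integral_real_density) (auto simp: algebra_simps)
  ultimately show ?thesis using f by simp
qed

lemma density_one_plus_in_KL_ball:
  fixes h :: "'a \<Rightarrow> real"
  assumes P: "prob_space P"
    and h: "h \<in> borel_measurable P" "\<And>x. \<bar>h x\<bar> \<le> B" "integral\<^sup>L P h = 0"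
    and t: "0 \<le> t" "t * B \<le> 1/2"
  shows "density P (\<lambda>x. 1 + t * h x) \<in> KL_ball P (t\<^sup>2 / 2 * (1 + 2 * t * B) * (\<integral>x. (h x)\<^sup>2 \<partial>P))"
proof -
  interpret prob_space P by fact
  define E where "E x = 1 + t * h x" for x
  define c where "c = t\<^sup>2 / 2 * (1 + 2 * t * B)"
  have B: "0 \<le> B" using h(2)[of undefined] by linarith
  have c: "0 \<le> c" unfolding c_def using t B by simp
  have th: "\<bar>t * h x\<bar> \<le> t * B" for x
    using t(1) h(2)[of x] by (simp add: abs_mult mult_left_mono)
  have E_ge: "1/2 \<le> E x" for x using th[of x] t(2) unfolding E_def by (simp add: abs_le_iff)
  have E_meas: "E \<in> borel_measurable P" unfolding E_def using h(1) by measurable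
  have h_sq: "(h x)\<^sup>2 \<le> B\<^sup>2" for x using power_mono[OF h(2)[of x] abs_ge_zero, of 2] by simp
  have int_h: "integrable P h" using h by (intro integrable_const_bound[where B=B]) auto
  have int_h2: "integrable P (\<lambda>x. (h x)\<^sup>2)"
    using h(1) h_sq by (intro integrable_const_bound[where B="B\<^sup>2"]) auto
  have int_E: "integrable P E" unfolding E_def using int_h by simp
  have upper: "E x * ln (E x) \<le> t * h x + c * (h x)\<^sup>2" for x
    using xlnx_one_plus_mult_le[OF t h(2)] unfolding E_def c_def .
  have lower: "t * h x \<le> E x * ln (E x)" for x
    using mult_le_xlnx_minus_plus_exp[of "E x" 0] E_ge[of x] unfolding E_def by simp
  have int_ElnE: "integrable P (\<lambda>x. E x * ln (E x))"
  proof (rule integrable_const_bound[where B="t * B + c * B\<^sup>2"])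
    have "norm (E x * ln (E x)) \<le> t * B + c * B\<^sup>2" for x
      using upper[of x] lower[of x] th[of x] mult_left_mono[OF h_sq c, of x]
        mult_nonneg_nonneg[OF c zero_le_power2[of "h x"]]
      by (simp add: abs_le_iff)
    then show "AE x in P. norm (E x * ln (E x)) \<le> t * B + c * B\<^sup>2" by simp
  qed (use E_meas in measurable)
  have integral_E: "integral\<^sup>L P E = 1" unfolding E_def using int_h h(3) by (simp add: prob_space)
  have "(\<integral>x. E x * ln (E x) \<partial>P) \<le> c * (\<integral>x. (h x)\<^sup>2 \<partial>P)"
  proof -
    have "(\<integral>x. E x * ln (E x) \<partial>P) \<le> (\<integral>x. t * h x + c * (h x)\<^sup>2 \<partial>P)"
      using int_ElnE int_h int_h2 upper by (intro integral_mono) auto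
    also have "\<dots> = c * (\<integral>x. (h x)\<^sup>2 \<partial>P)" using int_h int_h2 h(3) by simp
    finally show ?thesis .
  qed
  moreover have E_nonneg: "0 \<le> E x" for x using E_ge[of x] by linarith
  ultimately show ?thesis
    using density_in_KL_ball[OF P E_meas E_nonneg int_E integral_E int_ElnE] unfolding E_def c_def by simp
qed

lemma KL_ball_perturbation_eventually:
  fixes P :: "'a measure" and f h :: "'a \<Rightarrow> real"
  assumes P: "prob_space P"
    and h: "h \<in> borel_measurable P" "\<And>x. \<bar>h x\<bar> \<le> B" "integral\<^sup>L P h = 0"
    and f: "integrable P f"
    and a: "(\<integral>x. h x * f x \<partial>P) = a" "(\<integral>x. (h x)\<^sup>2 \<partial>P) \<le> a" "0 < a"
    and \<kappa>: "0 < \<kappa>" "\<kappa> < 1"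
  shows "eventually (\<lambda>C. \<exists>Q\<in>KL_ball P C.
           integral\<^sup>L P f + \<kappa> * sqrt (2 * a) * sqrt C \<le> integral\<^sup>L Q f) (at_right 0)"
proof -
  \<comment> \<open>t is chosen so that t^2 a/2 = \<kappa>^2 C: the second-order KL cost of the tilt 1 + t h
    then fits into the budget C, leaving the factor 1/\<kappa>^2 - 1 for the cubic error\<close>
  define t where "t C = \<kappa> * sqrt 2 * sqrt C / sqrt a" for C
  have B: "0 \<le> B" using h(2)[of undefined] by linarith
  have tB_lim: "((\<lambda>C. t C * B) \<longlongrightarrow> 0) (at_right 0)"
    unfolding t_def using a(3) by (auto intro!: tendsto_eq_intros)
  define \<rho> where "\<rho> = min (1/2) ((1 / \<kappa>\<^sup>2 - 1) / 2)"
  have "0 < \<rho>"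
    using \<kappa> power_strict_mono[OF \<kappa>(2), of 2] unfolding \<rho>_def by (simp add: field_simps)
  with tB_lim have "eventually (\<lambda>C. t C * B < \<rho>) (at_right 0)"
    by (rule order_tendstoD(2))
  moreover have "eventually (\<lambda>C. 0 < C) (at_right (0::real))"
    by (simp add: eventually_at_right_less)
  ultimately show ?thesis
  proof eventually_elim
    case (elim C)
    then have C: "0 < C" and tB: "t C * B < \<rho>" by auto
    have t: "0 \<le> t C" unfolding t_def using \<kappa> C a(3) by simp
    have tB_half: "t C * B \<le> 1/2" using tB unfolding \<rho>_def by simp
    have "(t C)\<^sup>2 / 2 * (1 + 2 * t C * B) * (\<integral>x. (h x)\<^sup>2 \<partial>P) \<le> (t C)\<^sup>2 / 2 * (1 + 2 * t C * B) * a"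
      using a(2) t B by (intro mult_left_mono) auto
    also have "\<dots> = \<kappa>\<^sup>2 * (1 + 2 * t C * B) * C"
      unfolding t_def using C a(3) by (simp add: power_mult_distrib power_divide)
    also have "\<dots> \<le> C"
    proof -
      have "2 * t C * B \<le> 1 / \<kappa>\<^sup>2 - 1" using tB unfolding \<rho>_def by simp
      then have "\<kappa>\<^sup>2 * (1 + 2 * t C * B) \<le> 1" using \<kappa> by (simp add: field_simps)
      then show ?thesis using C by (simp add: mult_le_cancel_right1)
    qed
    finally have "density P (\<lambda>x. 1 + t C * h x) \<in> KL_ball P C"
      using KL_ball_mono density_one_plus_in_KL_ball[OF P h t tB_half] by blast
    moreover have "integral\<^sup>L (density P (\<lambda>x. 1 + t C * h x)) f = integral\<^sup>L P f + t C * a"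
      using integral_density_one_plus[OF h(1,2) t _ f] tB_half a(1) by simp
    moreover have "t C * a = \<kappa> * sqrt (2 * a) * sqrt C"
      unfolding t_def using a(3) by (simp add: real_sqrt_mult field_simps)
    ultimately show ?case by (intro bexI[where x="density P (\<lambda>x. 1 + t C * h x)"]) simp_all
  qed
qed

lemma abs_mult_truncation_le:
  fixes y c :: real
  assumes "0 \<le> c"
  shows "\<bar>y * max (- c) (min c y)\<bar> \<le> y\<^sup>2"
proof -
  have "\<bar>y\<bar> * \<bar>max (- c) (min c y)\<bar> \<le> \<bar>y\<bar> * \<bar>y\<bar>"
    using assms by (intro mult_left_mono) (auto simp: max_def min_def abs_if)
  then show ?thesis by (simp add: abs_mult power2_eq_square)
qed

lemma truncation_sq_le_mult:
  fixes y c :: real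
  assumes "0 \<le> c"
  shows "(max (- c) (min c y))\<^sup>2 \<le> y * max (- c) (min c y)"
proof -
  have "c * c \<le> - y * c" if "y \<le> - c" using that assms by (intro mult_right_mono) auto
  moreover have "c * c \<le> y * c" if "c \<le> y" using that assms by (intro mult_right_mono) auto
  ultimately show ?thesis by (auto simp: max_def min_def power2_eq_square)
qed

lemma integral_mult_truncation_tendsto:
  fixes g :: "'a \<Rightarrow> real"
  assumes "g \<in> borel_measurable M" "integrable M (\<lambda>x. (g x)\<^sup>2)"
  shows "(\<lambda>N. \<integral>x. g x * max (- real N) (min (real N) (g x)) \<partial>M) \<longlonglongrightarrow> (\<integral>x. (g x)\<^sup>2 \<partial>M)"
proof (rule integral_dominated_convergence[where w="\<lambda>x. (g x)\<^sup>2"])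
  show "AE x in M. (\<lambda>N. g x * max (- real N) (min (real N) (g x))) \<longlonglongrightarrow> (g x)\<^sup>2"
  proof (rule AE_I2)
    fix x
    obtain N0 :: nat where "\<bar>g x\<bar> \<le> real N0" using real_arch_simple by blast
    then have "\<forall>N\<ge>N0. g x * max (- real N) (min (real N) (g x)) = (g x)\<^sup>2"
      by (auto simp: power2_eq_square max_def min_def)
    then show "(\<lambda>N. g x * max (- real N) (min (real N) (g x))) \<longlonglongrightarrow> (g x)\<^sup>2"
      by (intro tendsto_eventually) (auto simp: eventually_sequentially)
  qed
  show "AE x in M. norm (g x * max (- real N) (min (real N) (g x))) \<le> (g x)\<^sup>2" for N
    using abs_mult_truncation_le by simp
qed (use assms in auto)

lemma centered_truncation_approx:
  fixes P :: "'a measure" and f :: "'a \<Rightarrow> real"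
  assumes P: "prob_space P"
    and f: "f \<in> borel_measurable P" "integrable P f" "integrable P (\<lambda>x. (f x)\<^sup>2)"
  defines "v \<equiv> integral\<^sup>L P (\<lambda>x. (f x - integral\<^sup>L P f)\<^sup>2)"
  assumes w: "w < v"
  obtains h B where "h \<in> borel_measurable P" "\<And>x. \<bar>h x\<bar> \<le> B" "integral\<^sup>L P h = 0"
    "(\<integral>x. (h x)\<^sup>2 \<partial>P) \<le> (\<integral>x. h x * f x \<partial>P)" "w < (\<integral>x. h x * f x \<partial>P)"
proof -
  interpret prob_space P by fact
  define m where "m = integral\<^sup>L P f"
  define g where "g x = f x - m" for x
  have g_meas: "g \<in> borel_measurable P" unfolding g_def using f(1) by measurable
  have int_g: "integrable P g" unfolding g_def using f(2) by simp
  have integral_g: "integral\<^sup>L P g = 0" unfolding g_def m_def using f(2) by (simp add: prob_space)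
  have int_g2: "integrable P (\<lambda>x. (g x)\<^sup>2)" using f(2,3) unfolding g_def power2_diff by simp
  define T where "T N x = max (- real N) (min (real N) (g x))" for N x
  have "(\<lambda>N. \<integral>x. g x * T N x \<partial>P) \<longlonglongrightarrow> v"
    using integral_mult_truncation_tendsto[OF g_meas int_g2] unfolding T_def v_def g_def m_def .
  then have "eventually (\<lambda>N. w < (\<integral>x. g x * T N x \<partial>P)) sequentially"
    using w by (rule order_tendstoD(1))
  then obtain N where N: "w < (\<integral>x. g x * T N x \<partial>P)"
    unfolding eventually_sequentially by blast
  have T_meas: "T N \<in> borel_measurable P" unfolding T_def using g_meas by measurable
  have T_bound: "\<bar>T N x\<bar> \<le> real N" for x unfolding T_def by auto
  have T_sq: "(T N x)\<^sup>2 \<le> g x * T N x" for x unfolding T_def by (rule truncation_sq_le_mult) simp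
  have int_T: "integrable P (T N)"
    using T_meas T_bound by (intro integrable_const_bound[where B="real N"]) auto
  have "(T N x)\<^sup>2 \<le> (real N)\<^sup>2" for x using power_mono[OF T_bound[of x] abs_ge_zero, of 2] by simp
  then have int_T2: "integrable P (\<lambda>x. (T N x)\<^sup>2)"
    using T_meas by (intro integrable_const_bound[where B="(real N)\<^sup>2"]) auto
  have int_gT: "integrable P (\<lambda>x. g x * T N x)"
  proof (rule Bochner_Integration.integrable_bound[OF int_g2])
    show "AE x in P. norm (g x * T N x) \<le> norm ((g x)\<^sup>2)"
      unfolding T_def using abs_mult_truncation_le by simp
  qed (use g_meas T_meas in measurable)
  define c where "c = integral\<^sup>L P (T N)"
  define h where "h x = T N x - c" for x
  have h_meas: "h \<in> borel_measurable P" unfolding h_def using T_meas by measurable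
  have h_bound: "\<bar>h x\<bar> \<le> real N + \<bar>c\<bar>" for x using T_bound[of x] unfolding h_def by linarith
  have integral_h: "integral\<^sup>L P h = 0" unfolding h_def c_def using int_T by (simp add: prob_space)
  have hf: "(\<integral>x. h x * f x \<partial>P) = (\<integral>x. g x * T N x \<partial>P)"
  proof -
    have "(\<lambda>x. h x * f x) = (\<lambda>x. g x * T N x + m * T N x - c * g x - c * m)"
      unfolding h_def g_def by (auto simp: fun_eq_iff algebra_simps)
    then show ?thesis using int_gT int_T int_g integral_g unfolding c_def by (simp add: prob_space)
  qed
  have "(\<integral>x. (h x)\<^sup>2 \<partial>P) \<le> (\<integral>x. g x * T N x \<partial>P)"
  proof -
    have "(\<integral>x. (h x)\<^sup>2 \<partial>P) = (\<integral>x. (T N x)\<^sup>2 \<partial>P) - c\<^sup>2"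
      using variance_eq[OF int_T int_T2] unfolding h_def c_def .
    also have "\<dots> \<le> (\<integral>x. g x * T N x \<partial>P)"
      using integral_mono[OF int_T2 int_gT T_sq] zero_le_power2[of c] by linarith
    finally show ?thesis .
  qed
  then show ?thesis using that[OF h_meas h_bound integral_h] N unfolding hf by blast
qed

lemma KL_ball_integral_upper_eventually:
  fixes P :: "'a measure" and f :: "'a \<Rightarrow> real"
  assumes P: "prob_space P"
    and f: "f \<in> borel_measurable P" "integrable P f" "integrable P (\<lambda>x. (f x)\<^sup>2)"
    and mgf: "\<exists>\<delta>>0. \<forall>l. \<bar>l\<bar> < \<delta> \<longrightarrow> integrable P (\<lambda>x. exp (l * (f x - integral\<^sup>L P f)))"
  defines "m \<equiv> integral\<^sup>L P f"
    and "v \<equiv> integral\<^sup>L P (\<lambda>x. (f x - integral\<^sup>L P f)\<^sup>2)"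
  assumes k: "sqrt (2 * v) < k"
  shows "eventually (\<lambda>C. \<forall>Q\<in>KL_ball P C. integral\<^sup>L Q f \<le> m + k * sqrt C) (at_right 0)"
proof -
  obtain l1 K where l1: "0 < l1" and bound: "\<And>l C Q. 0 < l \<Longrightarrow> l \<le> l1 \<Longrightarrow> Q \<in> KL_ball P C \<Longrightarrow>
      integral\<^sup>L Q f \<le> m + C / l + l / 2 * v + l\<^sup>2 * K"
    using KL_ball_integral_upper[OF P f mgf, folded m_def v_def] by blast
  have v: "0 \<le> v" unfolding v_def by (simp add: integral_nonneg_AE)
  \<comment> \<open>the infimum of 1/r + r v/2 over r > 0 is sqrt (2 v)\<close>
  obtain r where r: "0 < r" "1 / r + r * v / 2 < k"
  proof (cases "v = 0")
    case True
    then show ?thesis using that[of "2 / k"] k by simp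
  next
    case False
    define q where "q = sqrt (2 * v)"
    have q: "0 < q" "v = q\<^sup>2 / 2" unfolding q_def using v False by auto
    have "1 / (2 / q) + 2 / q * v / 2 = q"
      unfolding q(2) using q(1) by (simp add: field_simps power2_eq_square)
    then show ?thesis using that[of "2 / q"] k q unfolding q_def by simp
  qed
  have sqrt_lim: "((\<lambda>C. sqrt C) \<longlongrightarrow> 0) (at_right 0)"
    by (auto intro!: tendsto_eq_intros)
  have "eventually (\<lambda>C. sqrt C < l1 / r) (at_right 0)"
    using l1 r by (intro order_tendstoD(2)[OF sqrt_lim]) simp
  moreover have "eventually (\<lambda>C. r\<^sup>2 * K * sqrt C < k - (1 / r + r * v / 2)) (at_right 0)"
    using r by (intro order_tendstoD(2)[OF tendsto_mult_right_zero[OF sqrt_lim]]) simp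
  moreover have "eventually (\<lambda>C. 0 < C) (at_right (0::real))"
    by (simp add: eventually_at_right_less)
  ultimately show ?thesis
  proof eventually_elim
    case (elim C)
    define s where "s = sqrt C"
    have s: "0 < s" "s * s = C" unfolding s_def using elim by auto
    have "s * r < l1" using elim(1) r(1) unfolding s_def by (simp add: pos_less_divide_eq)
    then have l: "0 < r * s" "r * s \<le> l1" using r(1) s(1) by (auto simp: mult.commute)
    have "integral\<^sup>L Q f \<le> m + k * s" if Q: "Q \<in> KL_ball P C" for Q
    proof -
      have "integral\<^sup>L Q f \<le> m + C / (r * s) + r * s / 2 * v + (r * s)\<^sup>2 * K"
        using bound[OF l Q] .
      also have "\<dots> = m + s * (1 / r + r * v / 2 + r\<^sup>2 * K * s)"
        unfolding s(2)[symmetric] using s(1) r(1) by (simp add: field_simps power2_eq_square)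
      also have "\<dots> \<le> m + s * k"
        using elim s(1) unfolding s_def by (intro add_left_mono mult_left_mono) auto
      finally show ?thesis by (simp add: mult.commute)
    qed
    then show ?case unfolding s_def by blast
  qed
qed

lemma KL_ball_integral_lower_eventually:
  fixes P :: "'a measure" and f :: "'a \<Rightarrow> real"
  assumes P: "prob_space P"
    and f: "f \<in> borel_measurable P" "integrable P f" "integrable P (\<lambda>x. (f x)\<^sup>2)"
  defines "m \<equiv> integral\<^sup>L P f"
    and "v \<equiv> integral\<^sup>L P (\<lambda>x. (f x - integral\<^sup>L P f)\<^sup>2)"
  assumes k: "k < sqrt (2 * v)"
  shows "eventually (\<lambda>C. \<exists>Q\<in>KL_ball P C. m + k * sqrt C < integral\<^sup>L Q f) (at_right 0)"
proof (cases "k < 0")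
  case True
  have "eventually (\<lambda>C. 0 < C) (at_right (0::real))"
    by (simp add: eventually_at_right_less)
  then show ?thesis
  proof eventually_elim
    case (elim C)
    then show ?case using self_in_KL_ball[OF P, of C] True unfolding m_def
      by (intro bexI[where x=P]) (simp_all add: mult_neg_pos)
  qed
next
  case False
  define k1 where "k1 = (k + sqrt (2 * v)) / 2"
  have k1: "0 < k1" "k < k1" "k1 < sqrt (2 * v)" using False k unfolding k1_def by auto
  then have "sqrt (k1\<^sup>2) < sqrt (2 * v)" by simp
  then have "k1\<^sup>2 / 2 < v" unfolding real_sqrt_less_iff by simp
  then obtain h B where h: "h \<in> borel_measurable P" "\<And>x. \<bar>h x\<bar> \<le> B" "integral\<^sup>L P h = 0"
    and hf: "(\<integral>x. (h x)\<^sup>2 \<partial>P) \<le> (\<integral>x. h x * f x \<partial>P)" "k1\<^sup>2 / 2 < (\<integral>x. h x * f x \<partial>P)"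
    using centered_truncation_approx[OF P f, folded v_def] by blast
  define a where "a = (\<integral>x. h x * f x \<partial>P)"
  have a: "0 < a" using hf(2) zero_le_power2[of k1] unfolding a_def by linarith
  have "k1 < sqrt (2 * a)"
    using hf(2) k1(1) unfolding a_def by (intro real_less_rsqrt) simp
  then have \<kappa>: "0 < k1 / sqrt (2 * a)" "k1 / sqrt (2 * a) < 1" "k1 / sqrt (2 * a) * sqrt (2 * a) = k1"
    using k1(1) a by auto
  have "eventually (\<lambda>C. \<exists>Q\<in>KL_ball P C. m + k1 * sqrt C \<le> integral\<^sup>L Q f) (at_right 0)"
    using KL_ball_perturbation_eventually[OF P h f(2) a_def[symmetric] hf(1)[folded a_def] a \<kappa>(1,2)]
    unfolding \<kappa>(3) m_def .
  moreover have "eventually (\<lambda>C. 0 < C) (at_right (0::real))"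
    by (simp add: eventually_at_right_less)
  ultimately show ?thesis
  proof eventually_elim
    case (elim C)
    then have "m + k * sqrt C < m + k1 * sqrt C" using k1(2) by simp
    then show ?case using elim by (meson order_less_le_trans)
  qed
qed

lemma S_sup_normalized_tendsto:
  fixes P :: "'a measure" and f :: "'a \<Rightarrow> real"
  assumes P: "prob_space P"
    and f: "f \<in> borel_measurable P" "integrable P f" "integrable P (\<lambda>x. (f x)\<^sup>2)"
    and mgf: "\<exists>\<delta>>0. \<forall>l. \<bar>l\<bar> < \<delta> \<longrightarrow> integrable P (\<lambda>x. exp (l * (f x - integral\<^sup>L P f)))"
  defines "m \<equiv> integral\<^sup>L P f"
    and "v \<equiv> integral\<^sup>L P (\<lambda>x. (f x - integral\<^sup>L P f)\<^sup>2)"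
  shows "((\<lambda>C. (S_sup P f C - m) / sqrt C) \<longlongrightarrow> sqrt (2 * v)) (at_right 0)"
proof -
  note upper = KL_ball_integral_upper_eventually[OF P f mgf, folded m_def v_def]
  note lower = KL_ball_integral_lower_eventually[OF P f, folded m_def v_def]
  have pos: "eventually (\<lambda>C. 0 < C) (at_right (0::real))"
    by (simp add: eventually_at_right_less)
  show ?thesis
  proof (rule order_tendstoI)
    fix y assume y: "y < sqrt (2 * v)"
    have "sqrt (2 * v) < sqrt (2 * v) + 1" by simp
    from lower[OF y] upper[OF this] pos
    show "eventually (\<lambda>C. y < (S_sup P f C - m) / sqrt C) (at_right 0)"
    proof eventually_elim
      case (elim C)
      then obtain Q where Q: "Q \<in> KL_ball P C" "m + y * sqrt C < integral\<^sup>L Q f" by blast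
      have "bdd_above ((\<lambda>Q. integral\<^sup>L Q f) ` KL_ball P C)"
        using elim by (intro bdd_aboveI2) blast
      then have "integral\<^sup>L Q f \<le> S_sup P f C" unfolding S_sup_def by (rule cSUP_upper[OF Q(1)])
      then show ?case using Q(2) elim by (simp add: pos_less_divide_eq)
    qed
  next
    fix y assume y: "sqrt (2 * v) < y"
    then have "sqrt (2 * v) < (sqrt (2 * v) + y) / 2" by simp
    from upper[OF this] pos
    show "eventually (\<lambda>C. (S_sup P f C - m) / sqrt C < y) (at_right 0)"
    proof eventually_elim
      case (elim C)
      have "S_sup P f C \<le> m + (sqrt (2 * v) + y) / 2 * sqrt C"
        unfolding S_sup_def using elim self_in_KL_ball[OF P, of C] by (intro cSUP_least) auto
      moreover have "(sqrt (2 * v) + y) / 2 * sqrt C < y * sqrt C"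
        using elim y by (intro mult_strict_right_mono) auto
      ultimately have "S_sup P f C - m < y * sqrt C" by linarith
      then show ?case using elim by (simp add: divide_less_eq)
    qed
  qed
qed

lemma diff_mult_smallo_of_tendsto_ratio:
  fixes f g :: "'a \<Rightarrow> real"
  assumes "((\<lambda>x. f x / g x) \<longlongrightarrow> c) F" "eventually (\<lambda>x. g x \<noteq> 0) F"
  shows "(\<lambda>x. f x - c * g x) \<in> o[F](g)"
proof (rule smalloI_tendsto)
  have "((\<lambda>x. f x / g x - c) \<longlongrightarrow> 0) F"
    using tendsto_diff[OF assms(1) tendsto_const, of c] by simp
  moreover have "eventually (\<lambda>x. f x / g x - c = (f x - c * g x) / g x) F"
    using assms(2) by eventually_elim (simp add: field_simps)
  ultimately show "((\<lambda>x. (f x - c * g x) / g x) \<longlongrightarrow> 0) F"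
    by (rule Lim_transform_eventually)
qed (rule assms(2))

lemma eventually_at_right_0_along_decseq:
  assumes "eventually P (at_right (0::real))"
  obtains Cs :: "nat \<Rightarrow> real"
  where "\<forall>j. Cs j > 0" "decseq Cs" "Cs \<longlonglongrightarrow> 0" "\<forall>\<^sub>F j in sequentially. P (Cs j)"
proof -
  define Cs where "Cs j = inverse (real (Suc j))" for j
  have Cs: "\<forall>j. Cs j > 0" "decseq Cs" "Cs \<longlonglongrightarrow> 0"
    unfolding Cs_def using LIMSEQ_inverse_real_of_nat by (auto intro!: decseq_SucI simp: field_simps)
  then have "filterlim Cs (at_right 0) sequentially"
    by (intro tendsto_imp_filterlim_at_right) auto
  with assms have "\<forall>\<^sub>F j in sequentially. P (Cs j)"
    by (rule eventually_compose_filterlim)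
  with Cs that show ?thesis by blast
qed

theorem theoremS2:
  fixes P :: "'a measure" and f :: "'a \<Rightarrow> real"
  assumes "prob_space P"
    and "f \<in> borel_measurable P"
    and "integrable P f"
    and "integrable P (\<lambda>x. (f x)\<^sup>2)"
    and "\<exists>\<delta>>0. \<forall>l. \<bar>l\<bar> < \<delta> \<longrightarrow>
            integrable P (\<lambda>x. exp (l * (f x - integral\<^sup>L P f)))"
  defines "m \<equiv> integral\<^sup>L P f"
    and "v \<equiv> integral\<^sup>L P (\<lambda>x. (f x - integral\<^sup>L P f)\<^sup>2)"
  shows "(\<lambda>C. S_sup P f C - m - sqrt (2 * v) * sqrt C) \<in> o[at_right 0](\<lambda>C. sqrt C) \<and>
         (v > 0 \<longrightarrow>
           ((\<lambda>C. (S_sup P f C - m) / (sqrt (2 * v) * sqrt C)) \<longlongrightarrow> 1) (at_right 0)) \<and>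
         (v > 0 \<longrightarrow> (\<forall>k < sqrt (2 * v). \<exists>Cs :: nat \<Rightarrow> real.
           (\<forall>j. Cs j > 0) \<and> decseq Cs \<and> Cs \<longlonglongrightarrow> 0 \<and>
           (\<forall>\<^sub>F j in sequentially. S_sup P f (Cs j) > m + k * sqrt (Cs j))))"
proof (intro conjI impI allI)
  define F where "F C = (S_sup P f C - m) / sqrt C" for C
  have F: "(F \<longlongrightarrow> sqrt (2 * v)) (at_right 0)"
    using S_sup_normalized_tendsto[OF assms(1-5)] unfolding F_def m_def v_def .
  have pos: "eventually (\<lambda>C. 0 < C) (at_right (0::real))"
    by (simp add: eventually_at_right_less)
  have "\<forall>\<^sub>F C in at_right 0. sqrt C \<noteq> 0"
    using pos by eventually_elim simp
  with F show "(\<lambda>C. S_sup P f C - m - sqrt (2 * v) * sqrt C) \<in> o[at_right 0](\<lambda>C. sqrt C)"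
    unfolding F_def by (rule diff_mult_smallo_of_tendsto_ratio)
  assume v: "0 < v"
  have "((\<lambda>C. F C / sqrt (2 * v)) \<longlongrightarrow> 1) (at_right 0)"
    using tendsto_divide[OF F tendsto_const, of "sqrt (2 * v)"] v by simp
  then show "((\<lambda>C. (S_sup P f C - m) / (sqrt (2 * v) * sqrt C)) \<longlongrightarrow> 1) (at_right 0)"
    unfolding F_def by (simp add: mult.commute)
  fix k assume "k < sqrt (2 * v)"
  from order_tendstoD(1)[OF F this] pos
  have "\<forall>\<^sub>F C in at_right 0. S_sup P f C > m + k * sqrt C"
    by eventually_elim (simp add: F_def pos_less_divide_eq algebra_simps)
  then obtain Cs :: "nat \<Rightarrow> real" where "\<forall>j. Cs j > 0" "decseq Cs" "Cs \<longlonglongrightarrow> 0"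
    "\<forall>\<^sub>F j in sequentially. S_sup P f (Cs j) > m + k * sqrt (Cs j)"
    by (rule eventually_at_right_0_along_decseq)
  then show "\<exists>Cs :: nat \<Rightarrow> real. (\<forall>j. Cs j > 0) \<and> decseq Cs \<and> Cs \<longlonglongrightarrow> 0 \<and>
      (\<forall>\<^sub>F j in sequentially. S_sup P f (Cs j) > m + k * sqrt (Cs j))"
    by blast
qed

end
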